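(* Let $(X,d)$ be a locally compact metric space and let $\{A_n\}_{n\ge 1}$ be a sequence of closed, connected subsets of $X$ such that $A_1\supseteq A_2\supseteq\cdots$ and $\bigcap_{n=1}^{\infty}A_n$ is a nonempty compact subset of $X$. Then for every neighborhood $U$ of $\bigcap_{n=1}^{\infty}A_n$ there is a natural number $n$ with $A_n\subseteq U$. *)

theory Defs
  imports "HOL-Analysis.Analysis"
begin

end

theory Submission
  imports Defs
begin

text \<open>
  Shrink the given neighbourhood of the compact set \<open>K = \<Inter>n. A n\<close> to an open \<open>G\<close> with
  compact closure, using local compactness. If no \<open>A n\<close> lay inside \<open>G\<close>, every connected \<open>A n\<close>
  would meet both \<open>G\<close> (through \<open>K\<close>) and its complement, hence the compact set
  \<open>frontier G\<close>. The traces \<open>frontier G \<inter> A n\<close> then form a decreasing sequence of nonempty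
  closed subsets of a compact set, so they have a common point, which lies in \<open>K \<subseteq> G\<close> and on
  the frontier of the open set \<open>G\<close> -- impossible.
\<close>

lemma compact_Int_Inter_decseq_nonempty:
  fixes F :: "nat \<Rightarrow> 'a::topological_space set"
  assumes "compact C" and closed: "\<And>n. closed (F n)" and "decseq F"
    and meets: "\<And>n. C \<inter> F n \<noteq> {}"
  shows "C \<inter> \<Inter>(range F) \<noteq> {}"
proof (rule compact_fip[THEN iffD1, OF \<open>compact C\<close>, rule_format])
  show "closed S" if "S \<in> range F" for S
    using that closed by blast
  fix B assume "B \<subseteq> range F" "finite B"
  then obtain N where N: "finite N" "B = F ` N"
    by (meson finite_subset_image)
  have "F (Max (insert 0 N)) \<subseteq> F k" if "k \<in> N" for k
    using \<open>decseq F\<close> N that by (simp add: decseq_def)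
  then have "F (Max (insert 0 N)) \<subseteq> \<Inter>B"
    using N by blast
  then show "C \<inter> \<Inter>B \<noteq> {}"
    using meets by blast
qed

lemma locally_compact_open_between:
  fixes K V :: "'a::metric_space set"
  assumes "locally_compact_space (euclidean :: 'a topology)"
    and "compact K" "open V" "K \<subseteq> V"
  obtains G where "open G" "K \<subseteq> G" "G \<subseteq> V" "compact (closure G)"
proof -
  have "\<exists>W L. openin euclidean W \<and> compactin euclidean L \<and> closedin euclidean L
                \<and> K \<subseteq> W \<and> W \<subseteq> L"
    using assms(1,2) by (simp add: locally_compact_space_compact_closed_compact)
  then obtain W L where "open W" "compact L" "K \<subseteq> W" "W \<subseteq> L"
    by auto
  have "closure (V \<inter> W) \<subseteq> L"
    using \<open>compact L\<close> \<open>W \<subseteq> L\<close> by (intro closure_minimal) (auto intro: compact_imp_closed)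
  moreover have "compact (L \<inter> closure (V \<inter> W))"
    using \<open>compact L\<close> by (simp add: compact_Int_closed)
  ultimately have "compact (closure (V \<inter> W))"
    by (simp add: Int_absorb1)
  with \<open>open V\<close> \<open>open W\<close> \<open>K \<subseteq> V\<close> \<open>K \<subseteq> W\<close> show thesis
    by (intro that[of "V \<inter> W"]) auto
qed

lemma atLeast_1_eq_range_Suc: "{1::nat..} = range Suc"
  using greaterThan_0 atLeast_Suc_greaterThan[of 0] by simp

theorem lemma3p2:
  fixes A :: "nat \<Rightarrow> 'a::metric_space set" and U :: "'a set"
  assumes lc: "locally_compact_space (euclidean :: 'a topology)"
    and cl: "\<And>n. n \<ge> 1 \<Longrightarrow> closed (A n)"
    and conn: "\<And>n. n \<ge> 1 \<Longrightarrow> connected (A n)"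
    and dec: "\<And>n. n \<ge> 1 \<Longrightarrow> A (Suc n) \<subseteq> A n"
    and ne: "(\<Inter>n\<in>{1..}. A n) \<noteq> {}"
    and cpt: "compact (\<Inter>n\<in>{1..}. A n)"
    and nbhd: "\<exists>V. open V \<and> (\<Inter>n\<in>{1..}. A n) \<subseteq> V \<and> V \<subseteq> U"
  shows "\<exists>n\<ge>1. A n \<subseteq> U"
proof (rule ccontr)
  assume not_inside: "\<not> (\<exists>n\<ge>1. A n \<subseteq> U)"
  define K where "K = (\<Inter>n\<in>{1..}. A n)"
  have "K \<noteq> {}"
    using ne K_def by simp
  obtain V where "open V" "K \<subseteq> V" "V \<subseteq> U"
    using nbhd K_def by blast
  then obtain G where G: "open G" "K \<subseteq> G" "G \<subseteq> V" "compact (closure G)"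
    using locally_compact_open_between[OF lc cpt[folded K_def]] by blast
  with \<open>V \<subseteq> U\<close> have "G \<subseteq> U"
    by blast
  have "frontier G \<inter> \<Inter>(range (\<lambda>n. A (Suc n))) \<noteq> {}"
  proof (rule compact_Int_Inter_decseq_nonempty)
    show "compact (frontier G)"
      using G(4) unfolding frontier_closures by (simp add: compact_Int_closed)
    show "decseq (\<lambda>n. A (Suc n))"
      by (rule decseq_SucI) (simp add: dec)
    fix n
    show "closed (A (Suc n))"
      by (simp add: cl)
    have "K \<subseteq> A (Suc n)"
      unfolding K_def by (intro INF_lower) simp
    with \<open>K \<noteq> {}\<close> G(2) have meets_G: "A (Suc n) \<inter> G \<noteq> {}"
      by blast
    have "\<not> A (Suc n) \<subseteq> U"
      using not_inside by simp
    with \<open>G \<subseteq> U\<close> have leaves_G: "A (Suc n) - G \<noteq> {}"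
      by blast
    have "connected (A (Suc n))"
      by (simp add: conn)
    from connected_Int_frontier[OF this meets_G leaves_G]
    show "frontier G \<inter> A (Suc n) \<noteq> {}"
      by blast
  qed
  moreover have "\<Inter>(range (\<lambda>n. A (Suc n))) = K"
    unfolding K_def atLeast_1_eq_range_Suc by (simp add: image_image)
  ultimately show False
    using G(1,2) frontier_disjoint_eq[of G] by blast
qed

end
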